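(* Let $V$ be a real-valued measurable function on the cone $\mathcal{C}=\mathbb{C}^\star/\mathbb{Z}_2$ with $(1+r)V\in L^2(\mathcal{C})$, let $\alpha\in[0,1]$, and for $m,m'\in\mathbb{Z}$ and $E,E'>0$ set $$v^{m,m'}_\alpha(E,E')=\int_0^\infty\!\!\int_0^\pi\overline{\phi_{\alpha;m,E}(r,\theta)}\,V(r,\theta)^2\,\phi_{\alpha;m',E'}(r,\theta)\,r\,dr\,d\theta,\qquad \phi_{\alpha;m,E}(r,\theta)=\frac{e^{2im\theta}}{\sqrt{2\pi}}J_{|2m+\alpha|}(\sqrt E\,r).$$ Then for arbitrary $m,m'$ the functions $v^{m,m'}_\alpha(E,E')$ have measurable partial derivatives up to order $3$ in $E$ and $E'$ on $(0,\infty)$, which are essentially bounded on compact subsets.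
   Context: $L^2(\mathcal{C})$ is identified with $\pi$-periodic (in $\theta$) functions $\psi(r,\theta)$ on $(0,\infty)\times\mathbb{R}$ with norm $\|\psi\|^2=\int_0^\infty\int_0^\pi|\psi|^2\,r\,dr\,d\theta$; $J_\mu$ is the Bessel function of the first kind. *)

theory Defs
  imports "HOL-Analysis.Analysis"
begin

text \<open>Bessel function of the first kind (power series), for order nu >= 0 and argument x > 0.\<close>
definition besselJ :: "real \<Rightarrow> real \<Rightarrow> real" where
  "besselJ nu x = (\<Sum>k. (-1) ^ k / (fact k * Gamma (real k + nu + 1)) * (x / 2) powr (2 * real k + nu))"

definition phi :: "real \<Rightarrow> int \<Rightarrow> real \<Rightarrow> real \<Rightarrow> real \<Rightarrow> complex" where
  "phi \<alpha> m E r \<theta> = cis (2 * of_int m * \<theta>) / complex_of_real (sqrt (2 * pi))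
      * complex_of_real (besselJ \<bar>2 * of_int m + \<alpha>\<bar> (sqrt E * r))"

definition vmat :: "(real \<Rightarrow> real \<Rightarrow> real) \<Rightarrow> real \<Rightarrow> int \<Rightarrow> int \<Rightarrow> real \<Rightarrow> real \<Rightarrow> complex" where
  "vmat V \<alpha> m m' E E' =
     (LINT p : {0<..} \<times> {0<..<pi} | lborel.
        cnj (phi \<alpha> m E (fst p) (snd p)) * complex_of_real ((V (fst p) (snd p))\<^sup>2)
        * phi \<alpha> m' E' (fst p) (snd p) * complex_of_real (fst p))"

text \<open>Iterated partial derivatives of a function of (E,E'); True = derivative in E, False = in E'.
  The list is read right to left (the head is the last derivative applied).\<close>
fun pderivs :: "bool list \<Rightarrow> (real \<Rightarrow> real \<Rightarrow> complex) \<Rightarrow> real \<Rightarrow> real \<Rightarrow> complex" where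
  "pderivs [] f = f"
| "pderivs (True # ds) f = (\<lambda>E E'. vector_derivative (\<lambda>x. pderivs ds f x E') (at E))"
| "pderivs (False # ds) f = (\<lambda>E E'. vector_derivative (\<lambda>y. pderivs ds f E y) (at E'))"

definition partial_exists :: "bool \<Rightarrow> bool list \<Rightarrow> (real \<Rightarrow> real \<Rightarrow> complex) \<Rightarrow> real \<Rightarrow> real \<Rightarrow> bool" where
  "partial_exists d ds f E E' =
     (if d then (\<lambda>x. pderivs ds f x E') differentiable (at E)
      else (\<lambda>y. pderivs ds f E y) differentiable (at E'))"

end

theory Submission
  imports Defs "HOL-Computational_Algebra.Polynomial"
begin

text \<open>
  With \<open>x = sqrt E r\<close>, the \<open>j\<close>-th derivative of \<open>J\<^sub>\<nu>(sqrt E r)\<close> in \<open>E\<close> is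
  \<open>(P(x) J\<^sub>\<nu>(x) + Q(x) x J\<^sub>\<nu>'(x)) / E\<^sup>j\<close> for polynomials with \<open>deg P \<le> j\<close> and \<open>deg Q < j\<close>.
  An energy estimate for \<open>u = sqrt x J\<^sub>\<nu>(x)\<close> gives \<open>\<bar>J\<^sub>\<nu>(x)\<bar> \<le> c / sqrt (1 + x)\<close> and
  \<open>\<bar>x J\<^sub>\<nu>'(x)\<bar> \<le> c sqrt (1 + x)\<close>. Hence, after \<open>a\<close> derivatives in \<open>E\<close> and \<open>b\<close> in \<open>E'\<close>, the
  integrand is bounded by \<open>K (1 + r) ^ (a + b - 1) V\<^sup>2 r\<close>, locally uniformly in \<open>(E, E')\<close>.
  For \<open>a + b \<le> 3\<close> this is dominated by \<open>K ((1 + r) V)\<^sup>2 r\<close>, integrable by hypothesis, so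
  dominated convergence allows differentiation under the integral sign and makes the
  derivatives continuous on \<open>(0, \<infinity>)\<^sup>2\<close>, hence measurable and locally bounded.
\<close>

section \<open>The Bessel function and its growth\<close>

definition bessel_coeff :: "real \<Rightarrow> nat \<Rightarrow> real" where
  "bessel_coeff \<nu> k = (-1) ^ k / (fact k * Gamma (real k + \<nu> + 1))"

text \<open>\<open>bessel_series n \<nu>\<close> is the \<open>n\<close>-th derivative of the entire function \<open>G\<close> with
  \<open>J\<^sub>\<nu>(x) = (x/2)\<^sup>\<nu> G((x/2)\<^sup>2)\<close> for \<open>x > 0\<close>.\<close>
definition bessel_series :: "nat \<Rightarrow> real \<Rightarrow> real \<Rightarrow> real" where
  "bessel_series n \<nu> z = (\<Sum>k. (diffs ^^ n) (bessel_coeff \<nu>) k * z ^ k)"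

lemma bessel_coeff_Suc:
  assumes "0 \<le> \<nu>"
  shows "bessel_coeff \<nu> (Suc k) = - bessel_coeff \<nu> k / ((real k + 1) * (real k + \<nu> + 1))"
proof -
  have "real k + \<nu> + 1 \<notin> \<int>\<^sub>\<le>\<^sub>0"
    using assms by (auto simp: nonpos_Ints_def)
  then have "Gamma (real (Suc k) + \<nu> + 1) = (real k + \<nu> + 1) * Gamma (real k + \<nu> + 1)"
    using Gamma_plus1[of "real k + \<nu> + 1"] by (simp add: algebra_simps)
  moreover have "0 < real k + \<nu> + 1"
    using assms by simp
  ultimately show ?thesis
    by (simp add: bessel_coeff_def)
qed

lemma abs_bessel_coeff_le:
  assumes "0 \<le> \<nu>"
  shows "\<bar>bessel_coeff \<nu> k\<bar> \<le> \<bar>bessel_coeff \<nu> 0\<bar> / fact k"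
proof (induction k)
  case (Suc k)
  have "\<bar>bessel_coeff \<nu> (Suc k)\<bar> = \<bar>bessel_coeff \<nu> k\<bar> / ((real k + 1) * (real k + \<nu> + 1))"
    using assms by (simp add: bessel_coeff_Suc abs_divide abs_mult)
  also have "\<dots> \<le> \<bar>bessel_coeff \<nu> k\<bar> / (real k + 1)"
  proof (rule divide_left_mono)
    show "real k + 1 \<le> (real k + 1) * (real k + \<nu> + 1)"
      using mult_left_mono[of 1 "real k + \<nu> + 1" "real k + 1"] assms by simp
  qed (use assms in auto)
  also have "\<dots> \<le> \<bar>bessel_coeff \<nu> 0\<bar> / fact k / (real k + 1)"
    using Suc by (rule divide_right_mono) simp
  also have "\<dots> = \<bar>bessel_coeff \<nu> 0\<bar> / fact (Suc k)"
    by (simp add: algebra_simps)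
  finally show ?case .
qed simp

lemma summable_bessel_series:
  assumes "0 \<le> \<nu>"
  shows "summable (\<lambda>k. (diffs ^^ n) (bessel_coeff \<nu>) k * z ^ k)"
proof (induction n arbitrary: z)
  case 0
  show ?case
  proof (rule summable_comparison_test')
    show "summable (\<lambda>k. \<bar>bessel_coeff \<nu> 0\<bar> * (inverse (fact k) * \<bar>z\<bar> ^ k))"
      by (intro summable_mult summable_exp)
    show "norm ((diffs ^^ 0) (bessel_coeff \<nu>) k * z ^ k)
        \<le> \<bar>bessel_coeff \<nu> 0\<bar> * (inverse (fact k) * \<bar>z\<bar> ^ k)" for k
      using mult_right_mono[OF abs_bessel_coeff_le[OF assms, of k], of "\<bar>z\<bar> ^ k"]
      by (simp add: abs_mult power_abs divide_inverse mult_ac)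
  qed
next
  case (Suc n)
  then show ?case
    by (simp add: termdiff_converges_all)
qed

lemma bessel_series_has_real_derivative:
  assumes "0 \<le> \<nu>"
  shows "(bessel_series n \<nu> has_real_derivative bessel_series (Suc n) \<nu> z) (at z)"
  unfolding bessel_series_def[abs_def] funpow.simps o_def
  by (intro termdiffs_strong_converges_everywhere summable_bessel_series assms)

lemma continuous_on_bessel_series: "0 \<le> \<nu> \<Longrightarrow> continuous_on A (bessel_series n \<nu>)"
  using DERIV_isCont[OF bessel_series_has_real_derivative] by (blast intro: continuous_at_imp_continuous_on)

text \<open>Bessel's equation \<open>z G'' + (\<nu> + 1) G' + G = 0\<close>, in the form \<open>(z G')' = - (\<nu> G' + G)\<close>.\<close>
lemma bessel_series_ode:
  assumes "0 \<le> \<nu>"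
  shows "((\<lambda>z. z * bessel_series 1 \<nu> z) has_real_derivative
           - (\<nu> * bessel_series 1 \<nu> z + bessel_series 0 \<nu> z)) (at z)"
proof -
  define c where "c = bessel_coeff \<nu>"
  define a where "a = diffs c"
  have sums: "(\<lambda>k. (diffs ^^ n) c k * z ^ k) sums bessel_series n \<nu> z" for n
    unfolding c_def bessel_series_def by (intro summable_sums summable_bessel_series assms)
  have "(\<lambda>k. z * (diffs a k * z ^ k)) sums (z * bessel_series 2 \<nu> z)"
    using sums_mult[OF sums[of 2]] by (simp add: a_def numeral_2_eq_2)
  then have "(\<lambda>k. real (Suc k) * a (Suc k) * z ^ Suc k) sums (z * bessel_series 2 \<nu> z)"
    by (simp add: diffs_def mult_ac)
  then have "(\<lambda>k. real k * a k * z ^ k) sums (z * bessel_series 2 \<nu> z)"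
    using sums_Suc_iff[of "\<lambda>k. real k * a k * z ^ k"] by simp
  then have "(\<lambda>k. real k * a k * z ^ k + (\<nu> + 1) * (a k * z ^ k) + c k * z ^ k) sums
      (z * bessel_series 2 \<nu> z + (\<nu> + 1) * bessel_series 1 \<nu> z + bessel_series 0 \<nu> z)"
    using sums[of 1] sums[of 0] by (intro sums_add sums_mult) (simp_all add: a_def)
  moreover have "real k * a k * z ^ k + (\<nu> + 1) * (a k * z ^ k) + c k * z ^ k = 0" for k
  proof -
    have pos: "0 < real k + 1" "0 < real k + \<nu> + 1"
      using assms by simp_all
    have "(real k + \<nu> + 1) * a k = (real k + 1) * (real k + \<nu> + 1) * c (Suc k)"
      by (simp add: a_def diffs_def)
    also have "\<dots> = - c k"
      using assms pos by (simp add: c_def bessel_coeff_Suc)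
    finally have "(real k + \<nu> + 1) * a k + c k = 0"
      by simp
    moreover have "real k * a k * z ^ k + (\<nu> + 1) * (a k * z ^ k) + c k * z ^ k
        = ((real k + \<nu> + 1) * a k + c k) * z ^ k"
      by (simp add: algebra_simps)
    ultimately show ?thesis
      by simp
  qed
  ultimately have "(\<lambda>k. 0) sums
      (z * bessel_series 2 \<nu> z + (\<nu> + 1) * bessel_series 1 \<nu> z + bessel_series 0 \<nu> z)"
    by simp
  then have ode: "z * bessel_series 2 \<nu> z + (\<nu> + 1) * bessel_series 1 \<nu> z + bessel_series 0 \<nu> z = 0"
    using sums_unique2[OF _ sums_zero] by blast
  show ?thesis
    by (rule DERIV_cong[OF DERIV_mult[OF DERIV_ident bessel_series_has_real_derivative[OF assms]]])
      (use ode in \<open>simp add: numeral_2_eq_2 algebra_simps\<close>)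
qed

definition besselJ_xderiv :: "real \<Rightarrow> real \<Rightarrow> real" where
  "besselJ_xderiv \<nu> x = (x / 2) powr \<nu> *
     (\<nu> * bessel_series 0 \<nu> ((x / 2)\<^sup>2) + 2 * ((x / 2)\<^sup>2 * bessel_series 1 \<nu> ((x / 2)\<^sup>2)))"

lemma besselJ_eq_series:
  assumes "0 \<le> \<nu>" "0 < x"
  shows "besselJ \<nu> x = (x / 2) powr \<nu> * bessel_series 0 \<nu> ((x / 2)\<^sup>2)"
proof -
  have "(x / 2) powr (2 * real k + \<nu>) = (x / 2) powr \<nu> * ((x / 2)\<^sup>2) ^ k" for k
  proof -
    have "(x / 2) powr (2 * real k) = (x / 2) ^ (2 * k)"
      using assms powr_realpow[of "x / 2" "2 * k"] by simp
    then show ?thesis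
      by (simp add: powr_add power_mult)
  qed
  then have "besselJ \<nu> x = (\<Sum>k. (x / 2) powr \<nu> * (bessel_coeff \<nu> k * ((x / 2)\<^sup>2) ^ k))"
    unfolding besselJ_def bessel_coeff_def by (simp add: algebra_simps)
  also have "\<dots> = (x / 2) powr \<nu> * bessel_series 0 \<nu> ((x / 2)\<^sup>2)"
    using suminf_mult[OF summable_bessel_series[OF assms(1), of 0]] by (simp add: bessel_series_def)
  finally show ?thesis .
qed

lemma half_powr_has_real_derivative:
  assumes "0 < x"
  shows "((\<lambda>x. (x / 2) powr \<nu>) has_real_derivative \<nu> / x * (x / 2) powr \<nu>) (at x)"
proof -
  have "((\<lambda>x. (x / 2) powr \<nu>) has_real_derivative \<nu> * (x / 2) powr (\<nu> - of_nat 1) * (1 / 2)) (at x)"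
    using assms DERIV_fun_powr[OF DERIV_cdivide[OF DERIV_ident], of x 2 \<nu>] by simp
  moreover have "\<nu> * (x / 2) powr (\<nu> - of_nat 1) * (1 / 2) = \<nu> / x * (x / 2) powr \<nu>"
    using assms by (simp add: powr_diff field_simps)
  ultimately show ?thesis
    by simp
qed

lemma half_square_has_real_derivative: "((\<lambda>x. (x / 2)\<^sup>2) has_real_derivative x / 2) (at x)"
  by (auto intro!: derivative_eq_intros)

lemma besselJ_has_real_derivative:
  assumes "0 \<le> \<nu>" "0 < x"
  shows "(besselJ \<nu> has_real_derivative besselJ_xderiv \<nu> x / x) (at x)"
proof -
  obtain P G0 G1 where PG: "(x / 2) powr \<nu> = P" "bessel_series 0 \<nu> ((x / 2)\<^sup>2) = G0"
    "bessel_series 1 \<nu> ((x / 2)\<^sup>2) = G1" "bessel_series (Suc 0) \<nu> ((x / 2)\<^sup>2) = G1"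
    by simp
  have series: "((\<lambda>x. (x / 2) powr \<nu> * bessel_series 0 \<nu> ((x / 2)\<^sup>2)) has_real_derivative
      besselJ_xderiv \<nu> x / x) (at x)"
    by (rule DERIV_cong, (rule DERIV_mult half_powr_has_real_derivative half_square_has_real_derivative
        DERIV_chain2[OF bessel_series_has_real_derivative] assms)+)
      (use assms in \<open>simp only: besselJ_xderiv_def PG, simp add: field_simps power2_eq_square\<close>)
  show ?thesis
    by (rule has_field_derivative_transform_within_open[OF series, of "{0<..}"])
      (use assms besselJ_eq_series in auto)
qed

lemma besselJ_xderiv_has_real_derivative:
  assumes "0 \<le> \<nu>" "0 < x"
  shows "(besselJ_xderiv \<nu> has_real_derivative - (x\<^sup>2 - \<nu>\<^sup>2) / x * besselJ \<nu> x) (at x)"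
proof -
  obtain P G0 G1 where PG: "(x / 2) powr \<nu> = P" "bessel_series 0 \<nu> ((x / 2)\<^sup>2) = G0"
    "bessel_series 1 \<nu> ((x / 2)\<^sup>2) = G1" "bessel_series (Suc 0) \<nu> ((x / 2)\<^sup>2) = G1"
    by simp
  have J: "besselJ \<nu> x = P * G0"
    using besselJ_eq_series[OF assms] PG by simp
  show ?thesis
    unfolding besselJ_xderiv_def[abs_def]
    by (rule DERIV_cong, (rule DERIV_chain2[OF bessel_series_ode] DERIV_const DERIV_mult DERIV_add
        half_powr_has_real_derivative half_square_has_real_derivative
        DERIV_chain2[OF bessel_series_has_real_derivative] assms)+)
      (use assms in \<open>simp only: PG J, simp add: field_simps power2_eq_square\<close>)
qed

text \<open>The energy \<open>u'\<^sup>2 + (1 - (\<nu>\<^sup>2 - 1/4) / x\<^sup>2) u\<^sup>2\<close> of \<open>u = sqrt x J\<^sub>\<nu>\<close>, which solves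
  \<open>u'' + (1 - (\<nu>\<^sup>2 - 1/4) / x\<^sup>2) u = 0\<close>.\<close>
definition bessel_energy :: "real \<Rightarrow> real \<Rightarrow> real" where
  "bessel_energy \<nu> x =
     ((besselJ_xderiv \<nu> x)\<^sup>2 + besselJ \<nu> x * besselJ_xderiv \<nu> x + (1/2 - \<nu>\<^sup>2) * (besselJ \<nu> x)\<^sup>2) / x
     + x * (besselJ \<nu> x)\<^sup>2"

lemma bessel_energy_has_real_derivative:
  assumes "0 \<le> \<nu>" "0 < x"
  shows "(bessel_energy \<nu> has_real_derivative (2 * \<nu>\<^sup>2 - 1/2) * (besselJ \<nu> x)\<^sup>2 / x\<^sup>2) (at x)"
proof -
  have x: "x \<noteq> 0"
    using assms by simp
  obtain J Y where JY: "besselJ \<nu> x = J" "besselJ_xderiv \<nu> x = Y"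
    by blast
  show ?thesis
    unfolding bessel_energy_def[abs_def]
    by (rule DERIV_cong, (rule DERIV_const DERIV_ident DERIV_add DERIV_mult DERIV_divide DERIV_power
        besselJ_has_real_derivative besselJ_xderiv_has_real_derivative assms x)+)
      (use x in \<open>simp only: JY, simp add: field_simps power2_eq_square\<close>)
qed

lemma bessel_energy_coercive:
  assumes "0 \<le> \<nu>" "1 + 2 * \<bar>1/2 - \<nu>\<^sup>2\<bar> \<le> x"
  shows "(besselJ_xderiv \<nu> x)\<^sup>2 / (2 * x) + x * (besselJ \<nu> x)\<^sup>2 / 4 \<le> bessel_energy \<nu> x"
proof -
  define c where "c = 1/2 - \<nu>\<^sup>2"
  obtain J Y where JY: "besselJ \<nu> x = J" "besselJ_xderiv \<nu> x = Y"
    by blast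
  have x1: "1 \<le> x"
    using assms(2) by (smt (verit) abs_ge_zero)
  then have "x \<le> x\<^sup>2"
    using mult_left_mono[of 1 x x] by (simp add: power2_eq_square)
  then have x: "1 \<le> x" "1 + 2 * \<bar>c\<bar> \<le> x\<^sup>2"
    using assms(2) x1 by (simp_all add: c_def)
  then have "0 \<le> (3/4) * x\<^sup>2 - 1/2 + c"
    by (auto simp: abs_if split: if_splits)
  then have "0 \<le> (Y + J)\<^sup>2 / 2 + J\<^sup>2 * ((3/4) * x\<^sup>2 - 1/2 + c)"
    by simp
  also have "\<dots> = x * (bessel_energy \<nu> x - (Y\<^sup>2 / (2 * x) + x * J\<^sup>2 / 4))"
    using x by (simp add: bessel_energy_def JY c_def field_simps power2_eq_square)
  finally show ?thesis
    using x by (simp add: JY zero_le_mult_iff)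
qed

text \<open>Gronwall's argument: \<open>W' \<le> 2 L W / x\<^sup>3\<close> for large \<open>x\<close>, so \<open>W exp (L / x\<^sup>2)\<close> decreases.\<close>
lemma bessel_energy_damped_antimono:
  fixes \<nu> :: real
  defines "L \<equiv> 2 * \<bar>2 * \<nu>\<^sup>2 - 1/2\<bar>"
  assumes "0 \<le> \<nu>" "1 + 2 * \<bar>1/2 - \<nu>\<^sup>2\<bar> \<le> a" "a \<le> b"
  shows "bessel_energy \<nu> b * exp (L / b\<^sup>2) \<le> bessel_energy \<nu> a * exp (L / a\<^sup>2)"
proof (rule DERIV_nonpos_imp_nonincreasing[where f = "\<lambda>x. bessel_energy \<nu> x * exp (L / x\<^sup>2)", OF assms(4)])
  fix x assume "a \<le> x" "x \<le> b"
  then have x0: "1 + 2 * \<bar>1/2 - \<nu>\<^sup>2\<bar> \<le> x"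
    using assms(3) by simp
  then have "1 \<le> x"
    by (smt (verit) abs_ge_zero)
  then have x: "0 < x" "x \<noteq> 0" "x\<^sup>2 \<noteq> 0"
    by simp_all
  obtain J W where JW: "besselJ \<nu> x = J" "bessel_energy \<nu> x = W"
    by blast
  have "x * J\<^sup>2 / 4 \<le> W"
    using bessel_energy_coercive[OF assms(2) x0] x(1) unfolding JW
    by (smt (verit) divide_nonneg_pos zero_le_power2)
  then have J2: "J\<^sup>2 \<le> 4 * W / x"
    using x(1) by (simp add: field_simps)
  have deriv: "((\<lambda>x. bessel_energy \<nu> x * exp (L / x\<^sup>2)) has_real_derivative
      exp (L / x\<^sup>2) * ((2 * \<nu>\<^sup>2 - 1/2) * J\<^sup>2 / x\<^sup>2 - 2 * L * W / x ^ 3)) (at x)"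
    by (rule DERIV_cong, (rule DERIV_mult DERIV_chain2[OF DERIV_exp] DERIV_divide DERIV_const DERIV_power
        DERIV_ident bessel_energy_has_real_derivative assms(2) x)+)
      (use x in \<open>simp only: JW, simp add: field_simps power2_eq_square power3_eq_cube\<close>)
  have "(2 * \<nu>\<^sup>2 - 1/2) * J\<^sup>2 / x\<^sup>2 \<le> \<bar>2 * \<nu>\<^sup>2 - 1/2\<bar> * (4 * W / x) / x\<^sup>2"
    using J2 x(1) by (intro divide_right_mono order_trans[OF mult_right_mono mult_left_mono]) auto
  also have "\<dots> = 2 * L * W / x ^ 3"
    using x(1) by (simp add: L_def field_simps power2_eq_square power3_eq_cube)
  finally have "exp (L / x\<^sup>2) * ((2 * \<nu>\<^sup>2 - 1/2) * J\<^sup>2 / x\<^sup>2 - 2 * L * W / x ^ 3) \<le> 0"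
    by (intro mult_nonneg_nonpos) auto
  then show "\<exists>y. ((\<lambda>x. bessel_energy \<nu> x * exp (L / x\<^sup>2)) has_real_derivative y) (at x) \<and> y \<le> 0"
    using deriv by blast
qed

lemma bessel_energy_bounded_at_top:
  assumes "0 \<le> \<nu>"
  obtains x0 M where "1 \<le> x0"
    "\<And>x. x0 \<le> x \<Longrightarrow> (besselJ_xderiv \<nu> x)\<^sup>2 / (2 * x) \<le> M \<and> x * (besselJ \<nu> x)\<^sup>2 / 4 \<le> M"
proof
  define x0 where "x0 = 1 + 2 * \<bar>1/2 - \<nu>\<^sup>2\<bar>"
  define L where "L = 2 * \<bar>2 * \<nu>\<^sup>2 - 1/2\<bar>"
  show "1 \<le> x0"
    by (simp add: x0_def)
  fix x assume "x0 \<le> x"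
  then have "0 < x"
    using \<open>1 \<le> x0\<close> by simp
  then have nonneg: "0 \<le> (besselJ_xderiv \<nu> x)\<^sup>2 / (2 * x)" "0 \<le> x * (besselJ \<nu> x)\<^sup>2 / 4"
    by simp_all
  have "(besselJ_xderiv \<nu> x)\<^sup>2 / (2 * x) + x * (besselJ \<nu> x)\<^sup>2 / 4 \<le> bessel_energy \<nu> x"
    using bessel_energy_coercive[OF assms] \<open>x0 \<le> x\<close> by (simp add: x0_def)
  also have "\<dots> \<le> bessel_energy \<nu> x * exp (L / x\<^sup>2)"
    using calculation nonneg mult_left_mono[of 1 "exp (L / x\<^sup>2)" "bessel_energy \<nu> x"]
    by (simp add: L_def)
  also have "\<dots> \<le> bessel_energy \<nu> x0 * exp (L / x0\<^sup>2)"
    unfolding L_def using bessel_energy_damped_antimono[OF assms] \<open>x0 \<le> x\<close> by (simp add: x0_def)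
  finally show "(besselJ_xderiv \<nu> x)\<^sup>2 / (2 * x) \<le> bessel_energy \<nu> x0 * exp (L / x0\<^sup>2)
      \<and> x * (besselJ \<nu> x)\<^sup>2 / 4 \<le> bessel_energy \<nu> x0 * exp (L / x0\<^sup>2)"
    using nonneg by linarith
qed

lemma besselJ_bounded_at_top:
  assumes "0 \<le> \<nu>"
  obtains x0 c where
    "\<And>x. x0 \<le> x \<Longrightarrow> \<bar>besselJ \<nu> x\<bar> * sqrt (1 + x) \<le> c \<and> \<bar>besselJ_xderiv \<nu> x\<bar> \<le> c * sqrt (1 + x)"
proof -
  obtain x0 M where "1 \<le> x0" and M: "\<And>x. x0 \<le> x \<Longrightarrow>
      (besselJ_xderiv \<nu> x)\<^sup>2 / (2 * x) \<le> M \<and> x * (besselJ \<nu> x)\<^sup>2 / 4 \<le> M"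
    using bessel_energy_bounded_at_top[OF assms] by blast
  have "\<bar>besselJ \<nu> x\<bar> * sqrt (1 + x) \<le> sqrt (8 * M) \<and> \<bar>besselJ_xderiv \<nu> x\<bar> \<le> sqrt (8 * M) * sqrt (1 + x)"
    if "x0 \<le> x" for x
  proof -
    have "1 \<le> x"
      using that \<open>1 \<le> x0\<close> by simp
    have "(besselJ \<nu> x)\<^sup>2 * (1 + x) \<le> 2 * (x * (besselJ \<nu> x)\<^sup>2)"
      using \<open>1 \<le> x\<close> mult_right_mono[of 1 x "(besselJ \<nu> x)\<^sup>2"] by (simp add: algebra_simps)
    also have "\<dots> \<le> 8 * M"
      using M[OF that] by simp
    finally have "sqrt ((besselJ \<nu> x)\<^sup>2 * (1 + x)) \<le> sqrt (8 * M)"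
      by (rule real_sqrt_le_mono)
    moreover have "(besselJ_xderiv \<nu> x)\<^sup>2 \<le> 8 * M * (1 + x)"
    proof -
      have "0 \<le> M"
        using M[OF that] \<open>1 \<le> x\<close> by (smt (verit) divide_nonneg_pos zero_le_power2)
      have "(besselJ_xderiv \<nu> x)\<^sup>2 \<le> 2 * M * x"
        using M[OF that] \<open>1 \<le> x\<close> by (simp add: pos_divide_le_eq mult_ac)
      also have "\<dots> \<le> 8 * M * (1 + x)"
        using \<open>0 \<le> M\<close> \<open>1 \<le> x\<close> by (intro mult_mono) auto
      finally show ?thesis .
    qed
    then have "sqrt ((besselJ_xderiv \<nu> x)\<^sup>2) \<le> sqrt (8 * M * (1 + x))"
      by (rule real_sqrt_le_mono)
    ultimately show ?thesis
      using \<open>1 \<le> x\<close> by (simp add: real_sqrt_mult)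
  qed
  then show ?thesis
    using that by blast
qed

lemma half_powr_mult_bounded:
  fixes g :: "real \<Rightarrow> real"
  assumes "0 \<le> \<nu>" "continuous_on {0..x0} g"
  shows "\<exists>B. \<forall>x\<in>{0<..x0}. \<bar>(x / 2) powr \<nu> * g x\<bar> \<le> B"
proof -
  have "bounded (g ` {0..x0})"
    by (intro compact_imp_bounded compact_continuous_image assms(2) compact_Icc)
  then obtain B where B: "\<forall>x\<in>{0..x0}. \<bar>g x\<bar> \<le> B"
    by (auto simp: bounded_iff)
  have "\<bar>(x / 2) powr \<nu> * g x\<bar> \<le> (x0 / 2) powr \<nu> * B" if "x \<in> {0<..x0}" for x
    unfolding abs_mult using that assms(1) B
    by (intro mult_mono) (auto intro!: powr_mono2)
  then show ?thesis
    by blast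
qed

lemma besselJ_bounded_near_zero:
  assumes "0 \<le> \<nu>"
  obtains B where
    "\<And>x. x \<in> {0<..x0} \<Longrightarrow> \<bar>besselJ \<nu> x\<bar> * sqrt (1 + x) \<le> B \<and> \<bar>besselJ_xderiv \<nu> x\<bar> \<le> B * sqrt (1 + x)"
proof -
  have cont: "continuous_on {0..x0} (\<lambda>x. bessel_series n \<nu> ((x / 2)\<^sup>2))" for n
    by (intro continuous_on_compose2[OF continuous_on_bessel_series[OF assms]] continuous_intros) auto
  obtain B1 where B1: "\<forall>x\<in>{0<..x0}. \<bar>(x / 2) powr \<nu> * bessel_series 0 \<nu> ((x / 2)\<^sup>2)\<bar> \<le> B1"
    using half_powr_mult_bounded[OF assms cont] by blast
  have "continuous_on {0..x0} (\<lambda>x. \<nu> * bessel_series 0 \<nu> ((x / 2)\<^sup>2)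
      + 2 * ((x / 2)\<^sup>2 * bessel_series 1 \<nu> ((x / 2)\<^sup>2)))"
    by (intro continuous_intros cont) simp
  then obtain B2 where B2: "\<forall>x\<in>{0<..x0}. \<bar>besselJ_xderiv \<nu> x\<bar> \<le> B2"
    unfolding besselJ_xderiv_def using half_powr_mult_bounded[OF assms] by blast
  have "\<bar>besselJ \<nu> x\<bar> * sqrt (1 + x) \<le> max B1 B2 * sqrt (1 + x0)
      \<and> \<bar>besselJ_xderiv \<nu> x\<bar> \<le> max B1 B2 * sqrt (1 + x0) * sqrt (1 + x)" if x: "x \<in> {0<..x0}" for x
  proof -
    have J: "\<bar>besselJ \<nu> x\<bar> \<le> max B1 B2"
      using B1[rule_format, OF x] besselJ_eq_series[OF assms, of x] x by simp
    have Y: "\<bar>besselJ_xderiv \<nu> x\<bar> \<le> max B1 B2"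
      using B2[rule_format, OF x] by simp
    have "0 \<le> max B1 B2"
      using order.trans[OF abs_ge_zero J] .
    have "sqrt (1 + x) \<le> sqrt (1 + x0)" "1 \<le> sqrt (1 + x)" "1 \<le> sqrt (1 + x0)"
      using x by auto
    then have "\<bar>besselJ \<nu> x\<bar> * sqrt (1 + x) \<le> max B1 B2 * sqrt (1 + x0)"
      using J by (intro mult_mono) auto
    moreover have "1 * 1 \<le> sqrt (1 + x0) * sqrt (1 + x)"
      using \<open>1 \<le> sqrt (1 + x)\<close> \<open>1 \<le> sqrt (1 + x0)\<close> by (intro mult_mono) auto
    then have "max B1 B2 \<le> max B1 B2 * sqrt (1 + x0) * sqrt (1 + x)"
      using mult_left_mono[OF _ \<open>0 \<le> max B1 B2\<close>] by (fastforce simp: mult.assoc)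
    ultimately show ?thesis
      using Y by linarith
  qed
  then show ?thesis
    using that by blast
qed

lemma besselJ_growth:
  assumes "0 \<le> \<nu>"
  obtains c where
    "\<And>x. 0 < x \<Longrightarrow> \<bar>besselJ \<nu> x\<bar> * sqrt (1 + x) \<le> c \<and> \<bar>besselJ_xderiv \<nu> x\<bar> \<le> c * sqrt (1 + x)"
proof -
  obtain x0 c where c: "\<And>x. x0 \<le> x \<Longrightarrow>
      \<bar>besselJ \<nu> x\<bar> * sqrt (1 + x) \<le> c \<and> \<bar>besselJ_xderiv \<nu> x\<bar> \<le> c * sqrt (1 + x)"
    using besselJ_bounded_at_top[OF assms] by blast
  obtain B where B: "\<And>x. x \<in> {0<..x0} \<Longrightarrow>
      \<bar>besselJ \<nu> x\<bar> * sqrt (1 + x) \<le> B \<and> \<bar>besselJ_xderiv \<nu> x\<bar> \<le> B * sqrt (1 + x)"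
    using besselJ_bounded_near_zero[OF assms] by blast
  show ?thesis
  proof (rule that)
    fix x :: real assume "0 < x"
    show "\<bar>besselJ \<nu> x\<bar> * sqrt (1 + x) \<le> max c B \<and> \<bar>besselJ_xderiv \<nu> x\<bar> \<le> max c B * sqrt (1 + x)"
    proof (cases "x0 \<le> x")
      case True
      have "c * sqrt (1 + x) \<le> max c B * sqrt (1 + x)"
        using \<open>0 < x\<close> by (intro mult_right_mono) auto
      then show ?thesis
        using c[OF True] max.cobounded1[of c B] by linarith
    next
      case False
      have "B * sqrt (1 + x) \<le> max c B * sqrt (1 + x)"
        using \<open>0 < x\<close> by (intro mult_right_mono) auto
      moreover have "\<bar>besselJ \<nu> x\<bar> * sqrt (1 + x) \<le> B \<and> \<bar>besselJ_xderiv \<nu> x\<bar> \<le> B * sqrt (1 + x)"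
        using B False \<open>0 < x\<close> by simp
      ultimately show ?thesis
        using max.cobounded2[of B c] by linarith
    qed
  qed
qed


section \<open>Derivatives with respect to the energy\<close>

definition bessel_combination :: "real \<Rightarrow> real poly \<Rightarrow> real poly \<Rightarrow> real \<Rightarrow> real" where
  "bessel_combination \<nu> P Q x = poly P x * besselJ \<nu> x + poly Q x * besselJ_xderiv \<nu> x"

lemma bessel_combination_has_real_derivative:
  assumes "0 \<le> \<nu>" "0 < x"
  shows "(bessel_combination \<nu> P Q has_real_derivative
           bessel_combination \<nu> ([:0, 1:] * pderiv P - [:- (\<nu>\<^sup>2), 0, 1:] * Q) (P + [:0, 1:] * pderiv Q) x / x)
         (at x)"
proof -
  obtain J Y where JY: "besselJ \<nu> x = J" "besselJ_xderiv \<nu> x = Y"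
    by blast
  have "x \<noteq> 0"
    using assms by simp
  show ?thesis
    unfolding bessel_combination_def[abs_def]
    by (rule DERIV_cong[OF DERIV_add[OF DERIV_mult[OF poly_DERIV besselJ_has_real_derivative[OF assms]]
          DERIV_mult[OF poly_DERIV besselJ_xderiv_has_real_derivative[OF assms]]]])
      (use \<open>x \<noteq> 0\<close> in \<open>simp add: JY field_simps power2_eq_square\<close>)
qed

text \<open>If \<open>\<partial>\<^sub>E\<^sup>j J\<^sub>\<nu>(sqrt E r) = (P(x) J\<^sub>\<nu>(x) + Q(x) x J\<^sub>\<nu>'(x)) / E\<^sup>j\<close> with \<open>x = sqrt E r\<close>, one more
  derivative has this form with the next pair, since \<open>dx/dE = x/(2E)\<close> and
  \<open>(x J\<^sub>\<nu>')' = - (x\<^sup>2 - \<nu>\<^sup>2) J\<^sub>\<nu> / x\<close>.\<close>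
fun bessel_dcoeffs :: "real \<Rightarrow> nat \<Rightarrow> real poly \<times> real poly" where
  "bessel_dcoeffs \<nu> 0 = (1, 0)"
| "bessel_dcoeffs \<nu> (Suc j) = (case bessel_dcoeffs \<nu> j of (P, Q) \<Rightarrow>
     (smult (1/2) ([:0, 1:] * pderiv P - [:- (\<nu>\<^sup>2), 0, 1:] * Q) - smult (real j) P,
      smult (1/2) (P + [:0, 1:] * pderiv Q) - smult (real j) Q))"

definition besselJ_Ederiv :: "real \<Rightarrow> nat \<Rightarrow> real \<Rightarrow> real \<Rightarrow> real" where
  "besselJ_Ederiv \<nu> j E r =
     bessel_combination \<nu> (fst (bessel_dcoeffs \<nu> j)) (snd (bessel_dcoeffs \<nu> j)) (sqrt E * r) / E ^ j"

lemma besselJ_Ederiv_0 [simp]: "besselJ_Ederiv \<nu> 0 E r = besselJ \<nu> (sqrt E * r)"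
  by (simp add: besselJ_Ederiv_def bessel_combination_def)

lemma besselJ_Ederiv_has_real_derivative:
  assumes "0 \<le> \<nu>" "0 < E" "0 < r"
  shows "((\<lambda>E. besselJ_Ederiv \<nu> j E r) has_real_derivative besselJ_Ederiv \<nu> (Suc j) E r) (at E)"
proof -
  obtain P Q where PQ: "bessel_dcoeffs \<nu> j = (P, Q)"
    by fastforce
  define P1 Q1 where "P1 = [:0, 1:] * pderiv P - [:- (\<nu>\<^sup>2), 0, 1:] * Q" and "Q1 = P + [:0, 1:] * pderiv Q"
  define x where "x = sqrt E * r"
  have x: "0 < x"
    using assms by (simp add: x_def)
  have sqrt_E: "sqrt E * sqrt E = E"
    using assms by simp
  have "((\<lambda>E. sqrt E * r) has_real_derivative x / (2 * E)) (at E)" (is "(_ has_real_derivative ?dx) _")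
    by (rule DERIV_cong[OF DERIV_cmult_right[OF DERIV_real_sqrt[OF assms(2)]]])
      (use assms sqrt_E in \<open>simp add: x_def field_simps\<close>)
  from DERIV_chain2[OF bessel_combination_has_real_derivative[OF assms(1) x, of P Q, unfolded x_def] this]
  have dcomb: "((\<lambda>E. bessel_combination \<nu> P Q (sqrt E * r)) has_real_derivative
      bessel_combination \<nu> P1 Q1 x / (2 * E)) (at E)"
    by (rule DERIV_cong) (use x assms in \<open>simp add: P1_def Q1_def x_def\<close>)
  have "E ^ j \<noteq> 0"
    using assms by simp
  from DERIV_divide[OF dcomb DERIV_power[OF DERIV_ident, where n = j] this]
  have "((\<lambda>E. bessel_combination \<nu> P Q (sqrt E * r) / E ^ j) has_real_derivative
      (bessel_combination \<nu> P1 Q1 x / 2 - real j * bessel_combination \<nu> P Q x) / E ^ Suc j) (at E)"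
    by (rule DERIV_cong) (cases j; use assms in \<open>simp add: field_simps x_def\<close>)
  moreover have "bessel_combination \<nu> (fst (bessel_dcoeffs \<nu> (Suc j))) (snd (bessel_dcoeffs \<nu> (Suc j))) x
      = bessel_combination \<nu> P1 Q1 x / 2 - real j * bessel_combination \<nu> P Q x"
    by (simp add: PQ P1_def Q1_def bessel_combination_def algebra_simps)
  ultimately show ?thesis
    by (simp add: besselJ_Ederiv_def PQ x_def)
qed

lemma isCont_besselJ_Ederiv:
  assumes "0 \<le> \<nu>" "0 < E" "0 < r"
  shows "isCont (\<lambda>q. besselJ_Ederiv \<nu> j (fst q) (snd q)) (E, r)"
proof -
  have "isCont (bessel_combination \<nu> P Q) (sqrt (fst (E, r)) * snd (E, r))" for P Q
    using assms by (intro DERIV_isCont[OF bessel_combination_has_real_derivative]) auto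
  then show ?thesis
    unfolding besselJ_Ederiv_def using assms
    by (intro continuous_intros isCont_o2[where f = "\<lambda>q. sqrt (fst q) * snd q"]) auto
qed

lemma continuous_on_besselJ_Ederiv:
  assumes "0 \<le> \<nu>" "0 < E"
  shows "continuous_on {0<..} (besselJ_Ederiv \<nu> j E)"
proof (intro continuous_at_imp_continuous_on ballI)
  fix r :: real assume "r \<in> {0<..}"
  then have F: "isCont (\<lambda>q. besselJ_Ederiv \<nu> j (fst q) (snd q)) (E, r)"
    using assms by (intro isCont_besselJ_Ederiv) auto
  have "isCont (\<lambda>r. (E, r)) r"
    by (intro continuous_intros)
  from isCont_o2[OF this F] show "isCont (besselJ_Ederiv \<nu> j E) r"
    by simp
qed

lemma degree_bessel_dcoeffs:
  "degree (fst (bessel_dcoeffs \<nu> j)) \<le> j \<and> degree ([:1, 1:] * snd (bessel_dcoeffs \<nu> j)) \<le> j"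
proof (induction j)
  case (Suc j)
  obtain P Q where PQ: "bessel_dcoeffs \<nu> j = (P, Q)"
    by fastforce
  have P: "degree P \<le> j" and "degree ([:1, 1:] * Q) \<le> j"
    using Suc.IH unfolding PQ fst_conv snd_conv by auto
  then have Q: "Q = 0 \<or> degree Q + 1 \<le> j"
    using degree_mult_eq[of "[:1, 1:]" Q] by fastforce
  have "degree ([:0, 1:] * pderiv P) \<le> Suc j"
    using P degree_mult_le[of "[:0, 1:]" "pderiv P"] by (simp add: degree_pderiv)
  moreover have "degree ([:- (\<nu>\<^sup>2), 0, 1:] * Q) \<le> Suc j"
    using Q degree_mult_le[of "[:- (\<nu>\<^sup>2), 0, 1:]" Q] by auto
  ultimately have "degree (fst (bessel_dcoeffs \<nu> (Suc j))) \<le> Suc j"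
    using P by (simp add: PQ degree_diff_le degree_smult_le order.trans[OF degree_smult_le])
  have "degree ([:0, 1:] * pderiv Q) \<le> j"
    using Q degree_mult_le[of "[:0, 1:]" "pderiv Q"] by (auto simp: degree_pderiv)
  then have "degree (snd (bessel_dcoeffs \<nu> (Suc j))) \<le> j"
    using P Q by (auto simp: PQ intro!: degree_diff_le order.trans[OF degree_smult_le] degree_add_le)
  then have "degree ([:1, 1:] * snd (bessel_dcoeffs \<nu> (Suc j))) \<le> Suc j"
    using degree_mult_le[of "[:1, 1:]" "snd (bessel_dcoeffs \<nu> (Suc j))"] by simp
  with \<open>degree (fst _) \<le> Suc j\<close> show ?case ..
qed simp

lemma abs_poly_le_one_plus_power:
  fixes p :: "real poly"
  assumes "degree p \<le> n" "0 \<le> x"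
  shows "\<bar>poly p x\<bar> \<le> (\<Sum>i\<le>degree p. \<bar>coeff p i\<bar>) * (1 + x) ^ n"
proof -
  have "\<bar>poly p x\<bar> \<le> (\<Sum>i\<le>degree p. \<bar>coeff p i\<bar> * x ^ i)"
    unfolding poly_altdef by (rule order.trans[OF sum_abs]) (use assms(2) in \<open>simp add: abs_mult\<close>)
  also have "\<dots> \<le> (\<Sum>i\<le>degree p. \<bar>coeff p i\<bar> * (1 + x) ^ n)"
  proof (intro sum_mono mult_left_mono)
    fix i assume "i \<in> {..degree p}"
    then have "x ^ i \<le> (1 + x) ^ i" "(1 + x) ^ i \<le> (1 + x) ^ n"
      using assms by (auto intro!: power_mono power_increasing)
    then show "x ^ i \<le> (1 + x) ^ n"
      by linarith
  qed simp
  finally show ?thesis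
    by (simp add: sum_distrib_right)
qed

lemma abs_bessel_combination_le:
  assumes "0 \<le> \<nu>" "degree P \<le> n" "degree ([:1, 1:] * Q) \<le> n"
  shows "\<exists>C. \<forall>x>0. \<bar>bessel_combination \<nu> P Q x\<bar> * sqrt (1 + x) \<le> C * (1 + x) ^ n"
proof -
  obtain c where c: "\<And>x. 0 < x \<Longrightarrow>
      \<bar>besselJ \<nu> x\<bar> * sqrt (1 + x) \<le> c \<and> \<bar>besselJ_xderiv \<nu> x\<bar> \<le> c * sqrt (1 + x)"
    using besselJ_growth[OF assms(1)] by blast
  define CP CQ where "CP = (\<Sum>i\<le>degree P. \<bar>coeff P i\<bar>)" and "CQ = (\<Sum>i\<le>degree ([:1, 1:] * Q). \<bar>coeff ([:1, 1:] * Q) i\<bar>)"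
  show ?thesis
  proof (intro exI[of _ "c * (CP + CQ)"] allI impI)
    fix x :: real assume x: "0 < x"
    have "\<bar>bessel_combination \<nu> P Q x\<bar> * sqrt (1 + x)
        \<le> \<bar>poly P x\<bar> * (\<bar>besselJ \<nu> x\<bar> * sqrt (1 + x)) + \<bar>poly Q x\<bar> * (\<bar>besselJ_xderiv \<nu> x\<bar> * sqrt (1 + x))"
      unfolding bessel_combination_def
      by (rule order.trans[OF mult_right_mono[OF abs_triangle_ineq]])
        (use x in \<open>simp_all add: abs_mult algebra_simps\<close>)
    also have "\<dots> \<le> \<bar>poly P x\<bar> * c + \<bar>poly Q x\<bar> * (c * (1 + x))"
    proof -
      have "\<bar>besselJ_xderiv \<nu> x\<bar> * sqrt (1 + x) \<le> c * sqrt (1 + x) * sqrt (1 + x)"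
        using c[OF x] x by (intro mult_right_mono) auto
      also have "\<dots> = c * (1 + x)"
        using x by (simp add: mult.assoc)
      finally show ?thesis
        using c[OF x] by (intro add_mono mult_left_mono) auto
    qed
    also have "\<dots> = c * (\<bar>poly P x\<bar> + \<bar>poly ([:1, 1:] * Q) x\<bar>)"
    proof -
      have "poly ([:1, 1:] * Q) x = (1 + x) * poly Q x"
        by (simp add: algebra_simps)
      then have "\<bar>poly ([:1, 1:] * Q) x\<bar> = (1 + x) * \<bar>poly Q x\<bar>"
        using x by (simp add: abs_mult)
      then show ?thesis
        by (simp add: algebra_simps)
    qed
    also have "\<dots> \<le> c * (CP * (1 + x) ^ n + CQ * (1 + x) ^ n)"
      using c[OF x] x unfolding CP_def CQ_def
      by (intro mult_left_mono add_mono abs_poly_le_one_plus_power assms)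
        (auto intro: order.trans[OF _ c[OF x, THEN conjunct1]])
    finally show "\<bar>bessel_combination \<nu> P Q x\<bar> * sqrt (1 + x) \<le> c * (CP + CQ) * (1 + x) ^ n"
      by (simp add: algebra_simps)
  qed
qed

lemma one_plus_mult_bounds:
  fixes s r :: real
  assumes "0 < s" "0 \<le> r"
  shows "min 1 s * (1 + r) \<le> 1 + s * r" "1 + s * r \<le> max 1 s * (1 + r)"
  using assms mult_right_mono[of 1 s r] mult_right_mono[of s 1 r]
  by (auto simp: min_def max_def algebra_simps)

lemma sqrt_growth_rescale:
  fixes h :: "real \<Rightarrow> real"
  assumes "\<And>x. 0 < x \<Longrightarrow> \<bar>h x\<bar> * sqrt (1 + x) \<le> C * (1 + x) ^ j" "0 < s1"
  shows "\<exists>K. \<forall>s r. s1 \<le> s \<longrightarrow> s \<le> s2 \<longrightarrow> 0 < r \<longrightarrow> \<bar>h (s * r)\<bar> * sqrt (1 + r) \<le> K * (1 + r) ^ j"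
proof (intro exI allI impI)
  define m M where "m = min 1 s1" and "M = max 1 s2"
  fix s r :: real assume s: "s1 \<le> s" "s \<le> s2" and r: "0 < r"
  have "0 < m" "0 < s * r"
    using assms(2) s r by (auto simp: m_def)
  have "m * (1 + r) \<le> min 1 s * (1 + r)"
    unfolding m_def using s r by (intro mult_right_mono min.mono) auto
  also have "\<dots> \<le> 1 + s * r"
    using assms(2) s r by (intro one_plus_mult_bounds) auto
  finally have "sqrt m * sqrt (1 + r) \<le> sqrt (1 + s * r)"
    by (metis real_sqrt_le_mono real_sqrt_mult)
  then have "\<bar>h (s * r)\<bar> * (sqrt m * sqrt (1 + r)) \<le> \<bar>h (s * r)\<bar> * sqrt (1 + s * r)"
    by (rule mult_left_mono) simp
  then have "\<bar>h (s * r)\<bar> * sqrt (1 + r) \<le> \<bar>h (s * r)\<bar> * sqrt (1 + s * r) / sqrt m"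
    using \<open>0 < m\<close> by (simp add: pos_le_divide_eq mult_ac)
  also have "\<dots> \<le> \<bar>C\<bar> * (1 + s * r) ^ j / sqrt m"
    using assms(1)[OF \<open>0 < s * r\<close>] \<open>0 < s * r\<close> \<open>0 < m\<close>
    by (intro divide_right_mono order.trans[OF _ mult_right_mono[OF abs_ge_self]]) auto
  also have "\<dots> \<le> \<bar>C\<bar> * (M * (1 + r)) ^ j / sqrt m"
  proof -
    have "1 + s * r \<le> max 1 s * (1 + r)"
      using assms(2) s r by (intro one_plus_mult_bounds) auto
    also have "\<dots> \<le> M * (1 + r)"
      unfolding M_def using s r by (intro mult_right_mono max.mono) auto
    finally show ?thesis
      using \<open>0 < s * r\<close> \<open>0 < m\<close> by (intro divide_right_mono mult_left_mono power_mono) auto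
  qed
  also have "\<dots> = \<bar>C\<bar> * M ^ j / sqrt m * (1 + r) ^ j"
    by (simp add: power_mult_distrib)
  finally show "\<bar>h (s * r)\<bar> * sqrt (1 + r) \<le> \<bar>C\<bar> * M ^ j / sqrt m * (1 + r) ^ j" .
qed

lemma abs_besselJ_Ederiv_le:
  assumes "0 \<le> \<nu>" "0 < e1"
  shows "\<exists>K. \<forall>E r. e1 \<le> E \<longrightarrow> E \<le> e2 \<longrightarrow> 0 < r \<longrightarrow>
           \<bar>besselJ_Ederiv \<nu> j E r\<bar> * sqrt (1 + r) \<le> K * (1 + r) ^ j"
proof -
  obtain C where "\<And>x. 0 < x \<Longrightarrow> \<bar>bessel_combination \<nu> (fst (bessel_dcoeffs \<nu> j))
      (snd (bessel_dcoeffs \<nu> j)) x\<bar> * sqrt (1 + x) \<le> C * (1 + x) ^ j"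
    using abs_bessel_combination_le[OF assms(1) conjunct1[OF degree_bessel_dcoeffs]
        conjunct2[OF degree_bessel_dcoeffs]] by blast
  from sqrt_growth_rescale[OF this, of "sqrt e1" "sqrt e2"]
  obtain K where K: "\<And>s r. sqrt e1 \<le> s \<Longrightarrow> s \<le> sqrt e2 \<Longrightarrow> 0 < r \<Longrightarrow>
      \<bar>bessel_combination \<nu> (fst (bessel_dcoeffs \<nu> j)) (snd (bessel_dcoeffs \<nu> j)) (s * r)\<bar> * sqrt (1 + r)
      \<le> K * (1 + r) ^ j"
    using assms(2) by auto
  show ?thesis
  proof (intro exI[of _ "\<bar>K\<bar> / e1 ^ j"] allI impI)
    fix E r :: real assume E: "e1 \<le> E" "E \<le> e2" and r: "0 < r"
    have "\<bar>besselJ_Ederiv \<nu> j E r\<bar> * sqrt (1 + r) = \<bar>bessel_combination \<nu> (fst (bessel_dcoeffs \<nu> j))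
        (snd (bessel_dcoeffs \<nu> j)) (sqrt E * r)\<bar> * sqrt (1 + r) / E ^ j"
      using E assms(2) by (simp add: besselJ_Ederiv_def abs_divide)
    also have "\<dots> \<le> \<bar>K\<bar> * (1 + r) ^ j / E ^ j"
      using K[of "sqrt E" r] E r assms(2)
      by (intro divide_right_mono order.trans[OF _ mult_right_mono[OF abs_ge_self]]) auto
    also have "\<dots> \<le> \<bar>K\<bar> * (1 + r) ^ j / e1 ^ j"
      using E r assms(2) by (intro divide_left_mono mult_pos_pos power_mono zero_less_power) auto
    finally show "\<bar>besselJ_Ederiv \<nu> j E r\<bar> * sqrt (1 + r) \<le> \<bar>K\<bar> / e1 ^ j * (1 + r) ^ j"
      by simp
  qed
qed

lemma abs_besselJ_Ederiv_mult_le: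
  assumes "0 \<le> \<nu>" "0 \<le> \<mu>" "0 < e1" "0 < e1'" "a + b \<le> 3"
  shows "\<exists>K\<ge>0. \<forall>E E' r. E \<in> {e1..e2} \<longrightarrow> E' \<in> {e1'..e2'} \<longrightarrow> 0 < r \<longrightarrow>
           \<bar>besselJ_Ederiv \<nu> a E r * besselJ_Ederiv \<mu> b E' r\<bar> \<le> K * (1 + r)\<^sup>2"
proof -
  obtain Ka where Ka: "\<And>E r. e1 \<le> E \<Longrightarrow> E \<le> e2 \<Longrightarrow> 0 < r \<Longrightarrow>
      \<bar>besselJ_Ederiv \<nu> a E r\<bar> * sqrt (1 + r) \<le> Ka * (1 + r) ^ a"
    using abs_besselJ_Ederiv_le[OF assms(1,3)] by blast
  obtain Kb where Kb: "\<And>E r. e1' \<le> E \<Longrightarrow> E \<le> e2' \<Longrightarrow> 0 < r \<Longrightarrow>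
      \<bar>besselJ_Ederiv \<mu> b E r\<bar> * sqrt (1 + r) \<le> Kb * (1 + r) ^ b"
    using abs_besselJ_Ederiv_le[OF assms(2,4)] by blast
  show ?thesis
  proof (intro exI[of _ "\<bar>Ka\<bar> * \<bar>Kb\<bar>"] conjI allI impI)
    fix E E' r :: real assume E: "E \<in> {e1..e2}" and E': "E' \<in> {e1'..e2'}" and r: "0 < r"
    have "\<bar>besselJ_Ederiv \<nu> a E r * besselJ_Ederiv \<mu> b E' r\<bar> * (1 + r)
        = (\<bar>besselJ_Ederiv \<nu> a E r\<bar> * sqrt (1 + r)) * (\<bar>besselJ_Ederiv \<mu> b E' r\<bar> * sqrt (1 + r))"
      using r by (simp add: abs_mult mult_ac)
    also have "\<dots> \<le> (\<bar>Ka\<bar> * (1 + r) ^ a) * (\<bar>Kb\<bar> * (1 + r) ^ b)"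
    proof (rule mult_mono)
      have "\<bar>besselJ_Ederiv \<nu> a E r\<bar> * sqrt (1 + r) \<le> Ka * (1 + r) ^ a"
        using E r by (intro Ka) auto
      moreover have "Ka * (1 + r) ^ a \<le> \<bar>Ka\<bar> * (1 + r) ^ a"
        using r by (intro mult_right_mono) auto
      ultimately show "\<bar>besselJ_Ederiv \<nu> a E r\<bar> * sqrt (1 + r) \<le> \<bar>Ka\<bar> * (1 + r) ^ a"
        by linarith
      have "\<bar>besselJ_Ederiv \<mu> b E' r\<bar> * sqrt (1 + r) \<le> Kb * (1 + r) ^ b"
        using E' r by (intro Kb) auto
      moreover have "Kb * (1 + r) ^ b \<le> \<bar>Kb\<bar> * (1 + r) ^ b"
        using r by (intro mult_right_mono) auto
      ultimately show "\<bar>besselJ_Ederiv \<mu> b E' r\<bar> * sqrt (1 + r) \<le> \<bar>Kb\<bar> * (1 + r) ^ b"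
        by linarith
    qed (use r in auto)
    also have "\<dots> = \<bar>Ka\<bar> * \<bar>Kb\<bar> * (1 + r) ^ (a + b)"
      by (simp add: power_add mult_ac)
    also have "\<dots> \<le> \<bar>Ka\<bar> * \<bar>Kb\<bar> * (1 + r) ^ 3"
      using r assms(5) by (intro mult_left_mono power_increasing) auto
    also have "\<dots> = (\<bar>Ka\<bar> * \<bar>Kb\<bar> * (1 + r)\<^sup>2) * (1 + r)"
      by (simp add: power3_eq_cube power2_eq_square)
    finally show "\<bar>besselJ_Ederiv \<nu> a E r * besselJ_Ederiv \<mu> b E' r\<bar> \<le> \<bar>Ka\<bar> * \<bar>Kb\<bar> * (1 + r)\<^sup>2"
      by (rule mult_right_le_imp_le) (use r in simp)
  qed simp
qed


section \<open>Differentiation under the integral sign\<close>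

lemma has_vector_derivative_iff_difference_quotient:
  fixes f :: "real \<Rightarrow> 'a::real_normed_vector"
  shows "(f has_vector_derivative f') (at x) \<longleftrightarrow> ((\<lambda>y. (f y - f x) /\<^sub>R (y - x)) \<longlongrightarrow> f') (at x)"
proof -
  have "\<forall>\<^sub>F y in at x. norm (f y - f x - (y - x) *\<^sub>R f') / norm (y - x) = norm ((f y - f x) /\<^sub>R (y - x) - f')"
    unfolding eventually_at_filter
  proof (intro always_eventually allI impI)
    fix y assume "y \<noteq> x"
    then have "(f y - f x) /\<^sub>R (y - x) - f' = (f y - f x - (y - x) *\<^sub>R f') /\<^sub>R (y - x)"
      by (simp add: scaleR_diff_right)
    then show "norm (f y - f x - (y - x) *\<^sub>R f') / norm (y - x) = norm ((f y - f x) /\<^sub>R (y - x) - f')"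
      by (simp add: divide_inverse abs_inverse mult.commute)
  qed
  then show ?thesis
    unfolding has_vector_derivative_def has_derivative_iff_norm
    by (simp add: bounded_linear_scaleR_left tendsto_cong tendsto_norm_zero_iff LIM_zero_iff)
qed

lemma norm_difference_quotient_le:
  fixes f :: "real \<Rightarrow> 'a::real_normed_vector"
  assumes "\<And>x. x \<in> {a<..<b} \<Longrightarrow> (f has_vector_derivative f' x) (at x)"
    and "\<And>x. x \<in> {a<..<b} \<Longrightarrow> norm (f' x) \<le> B"
    and "x \<in> {a<..<b}" "y \<in> {a<..<b}"
  shows "norm ((f y - f x) /\<^sub>R (y - x)) \<le> B"
proof (cases "y = x")
  case False
  have "norm (f y - f x) \<le> B * norm (y - x)"
  proof (rule differentiable_bound[where f' = "\<lambda>x h. h *\<^sub>R f' x"])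
    show "(f has_derivative (\<lambda>h. h *\<^sub>R f' z)) (at z within {a<..<b})" if "z \<in> {a<..<b}" for z
      using assms(1)[OF that] by (simp add: has_vector_derivative_def has_derivative_at_withinI)
    show "onorm (\<lambda>h. h *\<^sub>R f' z) \<le> B" if "z \<in> {a<..<b}" for z
      using assms(2)[OF that] by (simp add: onorm_scaleR_left[OF bounded_linear_ident] onorm_id)
  qed (use assms in auto)
  moreover have "norm ((f y - f x) /\<^sub>R (y - x)) = norm (f y - f x) / \<bar>y - x\<bar>"
    by (simp add: divide_inverse mult.commute)
  ultimately show ?thesis
    using False by (simp add: pos_divide_le_eq)
qed (use assms order.trans[OF norm_ge_zero] in auto)

lemma has_vector_derivative_integral:
  fixes f f' :: "real \<Rightarrow> 'a \<Rightarrow> 'b::{banach, second_countable_topology}"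
  assumes x0: "x0 \<in> {a<..<b}"
    and integrable: "\<And>x. x \<in> {a<..<b} \<Longrightarrow> integrable M (f x)"
    and measurable: "f' x0 \<in> borel_measurable M"
    and deriv: "\<And>x p. x \<in> {a<..<b} \<Longrightarrow> ((\<lambda>x. f x p) has_vector_derivative f' x p) (at x)"
    and integrable_D: "integrable M D"
    and bound: "\<And>x p. x \<in> {a<..<b} \<Longrightarrow> norm (f' x p) \<le> D p"
  shows "((\<lambda>x. \<integral>p. f x p \<partial>M) has_vector_derivative (\<integral>p. f' x0 p \<partial>M)) (at x0)"
proof -
  define q where "q y p = (f y p - f x0 p) /\<^sub>R (y - x0)" for y p
  have "((\<lambda>y. \<integral>p. q y p \<partial>M) \<longlongrightarrow> (\<integral>p. f' x0 p \<partial>M)) (at x0 within {a<..<b})"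
    unfolding tendsto_at_iff_sequentially comp_def
  proof (intro allI impI)
    fix X :: "nat \<Rightarrow> real" assume X: "\<forall>i. X i \<in> {a<..<b} - {x0}" and "X \<longlonglongrightarrow> x0"
    show "(\<lambda>n. \<integral>p. q (X n) p \<partial>M) \<longlonglongrightarrow> (\<integral>p. f' x0 p \<partial>M)"
    proof (rule integral_dominated_convergence[OF measurable _ integrable_D])
      show "q (X n) \<in> borel_measurable M" for n
      proof -
        have "X n \<in> {a<..<b}"
          using X by blast
        then show ?thesis
          unfolding q_def using integrable[OF \<open>X n \<in> _\<close>] integrable[OF x0] by measurable
      qed
      show "AE p in M. (\<lambda>n. q (X n) p) \<longlonglongrightarrow> f' x0 p"
      proof (intro AE_I2)
        fix p
        have "((\<lambda>y. q y p) \<longlongrightarrow> f' x0 p) (at x0)"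
          using deriv[OF x0, of p] unfolding q_def has_vector_derivative_iff_difference_quotient .
        then show "(\<lambda>n. q (X n) p) \<longlonglongrightarrow> f' x0 p"
          using X \<open>X \<longlonglongrightarrow> x0\<close> unfolding tendsto_at_iff_sequentially comp_def by auto
      qed
      show "AE p in M. norm (q (X n) p) \<le> D p" for n
        unfolding q_def using X x0 deriv bound by (intro AE_I2 norm_difference_quotient_le) auto
    qed
  qed
  moreover have "\<forall>\<^sub>F y in at x0 within {a<..<b}.
      (\<integral>p. q y p \<partial>M) = ((\<integral>p. f y p \<partial>M) - (\<integral>p. f x0 p \<partial>M)) /\<^sub>R (y - x0)"
    unfolding eventually_at_filter q_def
    by (intro always_eventually) (use integrable integrable[OF x0] in simp)
  ultimately have "((\<lambda>y. ((\<integral>p. f y p \<partial>M) - (\<integral>p. f x0 p \<partial>M)) /\<^sub>R (y - x0)) \<longlongrightarrow> (\<integral>p. f' x0 p \<partial>M))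
      (at x0 within {a<..<b})"
    using tendsto_cong by fastforce
  then show ?thesis
    unfolding has_vector_derivative_iff_difference_quotient
    using at_within_open[of x0 "{a<..<b}"] x0 by simp
qed

lemma continuous_on_integral:
  fixes f :: "'c::metric_space \<Rightarrow> 'a \<Rightarrow> 'b::{banach, second_countable_topology}"
  assumes measurable: "\<And>q. q \<in> B \<Longrightarrow> f q \<in> borel_measurable M"
    and continuous: "\<And>p. continuous_on B (\<lambda>q. f q p)"
    and integrable_D: "integrable M D"
    and bound: "\<And>q p. q \<in> B \<Longrightarrow> norm (f q p) \<le> D p"
  shows "continuous_on B (\<lambda>q. \<integral>p. f q p \<partial>M)"
proof (rule continuous_on_sequentiallyI)
  fix u q assume u: "\<forall>n. u n \<in> B" and q: "q \<in> B" and "u \<longlonglongrightarrow> q"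
  show "(\<lambda>n. \<integral>p. f (u n) p \<partial>M) \<longlonglongrightarrow> (\<integral>p. f q p \<partial>M)"
  proof (rule integral_dominated_convergence[OF measurable[OF q] _ integrable_D])
    show "AE p in M. (\<lambda>n. f (u n) p) \<longlonglongrightarrow> f q p"
      using continuous u q \<open>u \<longlonglongrightarrow> q\<close> unfolding continuous_on_sequentially comp_def by blast
  qed (use measurable bound u in auto)
qed

lemma set_borel_measurable_continuous_on:
  fixes f :: "'a::euclidean_space \<Rightarrow> 'b::real_normed_vector"
  assumes "open S" "continuous_on S f"
  shows "set_borel_measurable lborel S f"
  using borel_measurable_continuous_on_indicator[OF borel_open[OF assms(1)] assms(2)]
  by (simp add: set_borel_measurable_def)

lemma continuous_on_compact_bound:
  fixes f :: "'a::metric_space \<Rightarrow> 'b::real_normed_vector"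
  assumes "continuous_on S f" "compact K" "K \<subseteq> S"
  shows "\<exists>C. \<forall>x\<in>K. norm (f x) \<le> C"
  using compact_imp_bounded[OF compact_continuous_image[OF continuous_on_subset[OF assms(1,3)] assms(2)]]
  by (auto simp: bounded_iff)


section \<open>Integrals against a radial weight\<close>

lemma count_list_True_False: "count_list ds True + count_list ds False = length ds"
  by (induction ds) auto

locale radial_weight =
  fixes M :: "'a measure" and w :: "'a \<Rightarrow> complex" and \<rho> :: "'a \<Rightarrow> real"
  assumes w_measurable: "w \<in> borel_measurable M"
    and \<rho>_measurable: "\<rho> \<in> borel_measurable M"
    and \<rho>_pos: "\<And>p. w p \<noteq> 0 \<Longrightarrow> 0 < \<rho> p"
    and integrable_w: "integrable M (\<lambda>p. norm (w p) * (1 + \<rho> p)\<^sup>2)"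

begin

lemma measurable_radial:
  assumes "continuous_on {0<..} h"
  shows "(\<lambda>p. w p * of_real (h (\<rho> p))) \<in> borel_measurable M"
proof -
  have "(\<lambda>r. indicator {0<..} r *\<^sub>R h r) \<in> borel_measurable borel"
    by (rule borel_measurable_continuous_on_indicator[OF _ assms]) simp
  then have "(\<lambda>p. w p * of_real (indicator {0<..} (\<rho> p) *\<^sub>R h (\<rho> p))) \<in> borel_measurable M"
    using w_measurable \<rho>_measurable by measurable
  also have "(\<lambda>p. w p * of_real (indicator {0<..} (\<rho> p) *\<^sub>R h (\<rho> p))) = (\<lambda>p. w p * of_real (h (\<rho> p)))"
    using \<rho>_pos by (force simp: indicator_def)
  finally show ?thesis .
qed

lemma norm_radial_le:
  assumes "\<And>r. 0 < r \<Longrightarrow> \<bar>h r\<bar> \<le> K * (1 + r)\<^sup>2" "0 \<le> K"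
  shows "norm (w p * of_real (h (\<rho> p))) \<le> K * (norm (w p) * (1 + \<rho> p)\<^sup>2)"
proof (cases "w p = 0")
  case False
  then have "\<bar>h (\<rho> p)\<bar> \<le> K * (1 + \<rho> p)\<^sup>2"
    using assms(1) \<rho>_pos by blast
  then have "norm (w p) * \<bar>h (\<rho> p)\<bar> \<le> norm (w p) * (K * (1 + \<rho> p)\<^sup>2)"
    by (rule mult_left_mono) simp
  then show ?thesis
    by (simp add: norm_mult mult_ac)
qed (use assms in simp)

lemma integrable_radial:
  assumes "continuous_on {0<..} h" "\<And>r. 0 < r \<Longrightarrow> \<bar>h r\<bar> \<le> K * (1 + r)\<^sup>2" "0 \<le> K"
  shows "integrable M (\<lambda>p. w p * of_real (h (\<rho> p)))"
proof (rule Bochner_Integration.integrable_bound[where f = "\<lambda>p. K * (norm (w p) * (1 + \<rho> p)\<^sup>2)"])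
  show "integrable M (\<lambda>p. K * (norm (w p) * (1 + \<rho> p)\<^sup>2))"
    using integrable_w by simp
  show "(\<lambda>p. w p * of_real (h (\<rho> p))) \<in> borel_measurable M"
    using assms(1) by (rule measurable_radial)
  show "AE p in M. norm (w p * of_real (h (\<rho> p))) \<le> norm (K * (norm (w p) * (1 + \<rho> p)\<^sup>2))"
    using norm_radial_le[OF assms(2,3)] order.trans[OF _ abs_ge_self] by fastforce
qed

lemma has_vector_derivative_radial_integral:
  assumes x0: "x0 \<in> {a<..<b}"
    and deriv: "\<And>x r. x \<in> {a<..<b} \<Longrightarrow> 0 < r \<Longrightarrow> ((\<lambda>x. h x r) has_real_derivative h' x r) (at x)"
    and continuous: "\<And>x. x \<in> {a<..<b} \<Longrightarrow> continuous_on {0<..} (h x)" "continuous_on {0<..} (h' x0)"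
    and bound: "\<And>x r. x \<in> {a<..<b} \<Longrightarrow> 0 < r \<Longrightarrow> \<bar>h x r\<bar> \<le> K * (1 + r)\<^sup>2"
      "\<And>x r. x \<in> {a<..<b} \<Longrightarrow> 0 < r \<Longrightarrow> \<bar>h' x r\<bar> \<le> K * (1 + r)\<^sup>2"
    and "0 \<le> K"
  shows "((\<lambda>x. \<integral>p. w p * of_real (h x (\<rho> p)) \<partial>M) has_vector_derivative
           (\<integral>p. w p * of_real (h' x0 (\<rho> p)) \<partial>M)) (at x0)"
proof (rule has_vector_derivative_integral[OF x0, where D = "\<lambda>p. K * (norm (w p) * (1 + \<rho> p)\<^sup>2)"])
  fix x p assume x: "x \<in> {a<..<b}"
  show "((\<lambda>x. w p * of_real (h x (\<rho> p))) has_vector_derivative w p * of_real (h' x (\<rho> p))) (at x)"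
  proof (cases "w p = 0")
    case False
    then show ?thesis
      using deriv[OF x \<rho>_pos] by (intro has_vector_derivative_mult_right has_vector_derivative_of_real)
  qed simp
  show "norm (w p * of_real (h' x (\<rho> p))) \<le> K * (norm (w p) * (1 + \<rho> p)\<^sup>2)"
    using bound(2)[OF x] \<open>0 \<le> K\<close> by (rule norm_radial_le)
  show "integrable M (\<lambda>p. w p * of_real (h x (\<rho> p)))"
    using continuous(1)[OF x] bound(1)[OF x] \<open>0 \<le> K\<close> by (rule integrable_radial)
next
  show "(\<lambda>p. w p * of_real (h' x0 (\<rho> p))) \<in> borel_measurable M"
    using continuous(2) by (rule measurable_radial)
qed (use integrable_w in simp)

lemma continuous_on_radial_integral:
  fixes H :: "'c::metric_space \<Rightarrow> real \<Rightarrow> real"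
  assumes "\<And>r. 0 < r \<Longrightarrow> continuous_on B (\<lambda>q. H q r)" "\<And>q. q \<in> B \<Longrightarrow> continuous_on {0<..} (H q)"
    and "\<And>q r. q \<in> B \<Longrightarrow> 0 < r \<Longrightarrow> \<bar>H q r\<bar> \<le> K * (1 + r)\<^sup>2" "0 \<le> K"
  shows "continuous_on B (\<lambda>q. \<integral>p. w p * of_real (H q (\<rho> p)) \<partial>M)"
proof (rule continuous_on_integral[where D = "\<lambda>p. K * (norm (w p) * (1 + \<rho> p)\<^sup>2)"])
  fix p
  show "continuous_on B (\<lambda>q. w p * of_real (H q (\<rho> p)))"
  proof (cases "w p = 0")
    case False
    then show ?thesis
      using assms(1) \<rho>_pos by (intro continuous_intros) auto
  qed simp
  fix q assume "q \<in> B"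
  show "(\<lambda>p. w p * of_real (H q (\<rho> p))) \<in> borel_measurable M"
    using assms(2)[OF \<open>q \<in> B\<close>] by (rule measurable_radial)
  show "norm (w p * of_real (H q (\<rho> p))) \<le> K * (norm (w p) * (1 + \<rho> p)\<^sup>2)"
    using assms(3)[OF \<open>q \<in> B\<close>] assms(4) by (rule norm_radial_le)
qed (use integrable_w in simp)

definition bessel_matrix :: "real \<Rightarrow> real \<Rightarrow> nat \<Rightarrow> nat \<Rightarrow> real \<Rightarrow> real \<Rightarrow> complex" where
  "bessel_matrix \<nu> \<mu> a b E E' =
     (\<integral>p. w p * of_real (besselJ_Ederiv \<nu> a E (\<rho> p) * besselJ_Ederiv \<mu> b E' (\<rho> p)) \<partial>M)"

lemma bessel_matrix_has_vector_derivative_fst: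
  assumes "0 \<le> \<nu>" "0 \<le> \<mu>" "a + b \<le> 2" "0 < E" "0 < E'"
  shows "((\<lambda>x. bessel_matrix \<nu> \<mu> a b x E') has_vector_derivative bessel_matrix \<nu> \<mu> (Suc a) b E E') (at E)"
proof -
  obtain K1 where K1: "0 \<le> K1" "\<And>x r. x \<in> {E/2..2*E} \<Longrightarrow> 0 < r \<Longrightarrow>
      \<bar>besselJ_Ederiv \<nu> a x r * besselJ_Ederiv \<mu> b E' r\<bar> \<le> K1 * (1 + r)\<^sup>2"
    using abs_besselJ_Ederiv_mult_le[OF assms(1,2), of "E/2" E' a b "2*E" E'] assms by auto
  obtain K2 where K2: "0 \<le> K2" "\<And>x r. x \<in> {E/2..2*E} \<Longrightarrow> 0 < r \<Longrightarrow>
      \<bar>besselJ_Ederiv \<nu> (Suc a) x r * besselJ_Ederiv \<mu> b E' r\<bar> \<le> K2 * (1 + r)\<^sup>2"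
    using abs_besselJ_Ederiv_mult_le[OF assms(1,2), of "E/2" E' "Suc a" b "2*E" E'] assms by auto
  show ?thesis
    unfolding bessel_matrix_def
  proof (rule has_vector_derivative_radial_integral[where a = "E/2" and b = "2*E" and K = "max K1 K2"])
    fix x r :: real assume x: "x \<in> {E/2<..<2*E}" and r: "0 < r"
    show "((\<lambda>x. besselJ_Ederiv \<nu> a x r * besselJ_Ederiv \<mu> b E' r) has_real_derivative
        besselJ_Ederiv \<nu> (Suc a) x r * besselJ_Ederiv \<mu> b E' r) (at x)"
      using x r assms by (intro DERIV_cmult_right besselJ_Ederiv_has_real_derivative) auto
    show "\<bar>besselJ_Ederiv \<nu> a x r * besselJ_Ederiv \<mu> b E' r\<bar> \<le> max K1 K2 * (1 + r)\<^sup>2"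
      using K1(2)[of x r] x r by (auto intro: order.trans[OF _ mult_right_mono[OF max.cobounded1]])
    show "\<bar>besselJ_Ederiv \<nu> (Suc a) x r * besselJ_Ederiv \<mu> b E' r\<bar> \<le> max K1 K2 * (1 + r)\<^sup>2"
      using K2(2)[of x r] x r by (auto intro: order.trans[OF _ mult_right_mono[OF max.cobounded2]])
  qed (use assms K1 K2 in \<open>auto intro!: continuous_intros continuous_on_besselJ_Ederiv\<close>)
qed

lemma bessel_matrix_has_vector_derivative_snd:
  assumes "0 \<le> \<nu>" "0 \<le> \<mu>" "a + b \<le> 2" "0 < E" "0 < E'"
  shows "((\<lambda>y. bessel_matrix \<nu> \<mu> a b E y) has_vector_derivative bessel_matrix \<nu> \<mu> a (Suc b) E E') (at E')"
proof -
  obtain K1 where K1: "0 \<le> K1" "\<And>y r. y \<in> {E'/2..2*E'} \<Longrightarrow> 0 < r \<Longrightarrow>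
      \<bar>besselJ_Ederiv \<nu> a E r * besselJ_Ederiv \<mu> b y r\<bar> \<le> K1 * (1 + r)\<^sup>2"
    using abs_besselJ_Ederiv_mult_le[OF assms(1,2), of E "E'/2" a b E "2*E'"] assms by auto
  obtain K2 where K2: "0 \<le> K2" "\<And>y r. y \<in> {E'/2..2*E'} \<Longrightarrow> 0 < r \<Longrightarrow>
      \<bar>besselJ_Ederiv \<nu> a E r * besselJ_Ederiv \<mu> (Suc b) y r\<bar> \<le> K2 * (1 + r)\<^sup>2"
    using abs_besselJ_Ederiv_mult_le[OF assms(1,2), of E "E'/2" a "Suc b" E "2*E'"] assms by auto
  show ?thesis
    unfolding bessel_matrix_def
  proof (rule has_vector_derivative_radial_integral[where a = "E'/2" and b = "2*E'" and K = "max K1 K2"])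
    fix y r :: real assume y: "y \<in> {E'/2<..<2*E'}" and r: "0 < r"
    show "((\<lambda>y. besselJ_Ederiv \<nu> a E r * besselJ_Ederiv \<mu> b y r) has_real_derivative
        besselJ_Ederiv \<nu> a E r * besselJ_Ederiv \<mu> (Suc b) y r) (at y)"
      using y r assms by (intro DERIV_cmult besselJ_Ederiv_has_real_derivative) auto
    show "\<bar>besselJ_Ederiv \<nu> a E r * besselJ_Ederiv \<mu> b y r\<bar> \<le> max K1 K2 * (1 + r)\<^sup>2"
      using K1(2)[of y r] y r by (auto intro: order.trans[OF _ mult_right_mono[OF max.cobounded1]])
    show "\<bar>besselJ_Ederiv \<nu> a E r * besselJ_Ederiv \<mu> (Suc b) y r\<bar> \<le> max K1 K2 * (1 + r)\<^sup>2"
      using K2(2)[of y r] y r by (auto intro: order.trans[OF _ mult_right_mono[OF max.cobounded2]])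
  qed (use assms K1 K2 in \<open>auto intro!: continuous_intros continuous_on_besselJ_Ederiv\<close>)
qed

lemma continuous_on_bessel_matrix:
  assumes "0 \<le> \<nu>" "0 \<le> \<mu>" "a + b \<le> 3"
  shows "continuous_on ({0<..} \<times> {0<..}) (\<lambda>q. bessel_matrix \<nu> \<mu> a b (fst q) (snd q))"
proof (intro continuous_at_imp_continuous_on ballI)
  fix q0 :: "real \<times> real" assume "q0 \<in> {0<..} \<times> {0<..}"
  then obtain E0 E0' where q0: "q0 = (E0, E0')" "0 < E0" "0 < E0'"
    by auto
  define B where "B = {E0/2..2*E0} \<times> {E0'/2..2*E0'}"
  have B: "0 < fst q" "0 < snd q" if "q \<in> B" for q
    using that q0 by (auto simp: B_def)
  obtain K where K: "0 \<le> K" "\<And>E E' r. E \<in> {E0/2..2*E0} \<Longrightarrow> E' \<in> {E0'/2..2*E0'} \<Longrightarrow> 0 < r \<Longrightarrow>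
      \<bar>besselJ_Ederiv \<nu> a E r * besselJ_Ederiv \<mu> b E' r\<bar> \<le> K * (1 + r)\<^sup>2"
    using abs_besselJ_Ederiv_mult_le[OF assms(1,2), of "E0/2" "E0'/2" a b "2*E0" "2*E0'"] assms q0 by auto
  have "continuous_on B (\<lambda>q. bessel_matrix \<nu> \<mu> a b (fst q) (snd q))"
    unfolding bessel_matrix_def
  proof (rule continuous_on_radial_integral[where K = K])
    fix r :: real assume r: "0 < r"
    have "isCont (\<lambda>q. besselJ_Ederiv \<kappa> j (f q) r) q"
      if "isCont f q" "0 < f q" "0 \<le> \<kappa>" for \<kappa> j f and q :: "real \<times> real"
      using isCont_o2[OF continuous_Pair[OF that(1) continuous_const] isCont_besselJ_Ederiv[OF that(3,2) r]]
      by simp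
    then show "continuous_on B (\<lambda>q. besselJ_Ederiv \<nu> a (fst q) r * besselJ_Ederiv \<mu> b (snd q) r)"
      using B assms by (intro continuous_at_imp_continuous_on ballI continuous_intros) auto
  next
    fix q assume "q \<in> B"
    then show "continuous_on {0<..} (\<lambda>r. besselJ_Ederiv \<nu> a (fst q) r * besselJ_Ederiv \<mu> b (snd q) r)"
      using B assms by (intro continuous_intros continuous_on_besselJ_Ederiv) auto
  qed (use K in \<open>auto simp: B_def\<close>)
  moreover have "q0 \<in> interior B"
    using q0 by (auto simp: B_def interior_Times)
  ultimately show "isCont (\<lambda>q. bessel_matrix \<nu> \<mu> a b (fst q) (snd q)) q0"
    by (rule continuous_on_interior)
qed

lemma has_vector_derivative_eq_bessel_matrix:
  assumes "0 \<le> \<nu>" "0 \<le> \<mu>" "a + b \<le> 2" "0 < E" "0 < E'"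
    and eq: "\<And>x y. 0 < x \<Longrightarrow> 0 < y \<Longrightarrow> g x y = bessel_matrix \<nu> \<mu> a b x y"
  shows "((\<lambda>x. g x E') has_vector_derivative bessel_matrix \<nu> \<mu> (Suc a) b E E') (at E)"
    and "((\<lambda>y. g E y) has_vector_derivative bessel_matrix \<nu> \<mu> a (Suc b) E E') (at E')"
proof -
  show "((\<lambda>x. g x E') has_vector_derivative bessel_matrix \<nu> \<mu> (Suc a) b E E') (at E)"
    by (rule has_vector_derivative_transform_within_open[OF bessel_matrix_has_vector_derivative_fst[OF assms(1-5)]
          open_greaterThan, of 0]) (use assms in auto)
  show "((\<lambda>y. g E y) has_vector_derivative bessel_matrix \<nu> \<mu> a (Suc b) E E') (at E')"
    by (rule has_vector_derivative_transform_within_open[OF bessel_matrix_has_vector_derivative_snd[OF assms(1-5)]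
          open_greaterThan, of 0]) (use assms in auto)
qed

lemma pderivs_bessel_matrix:
  assumes "0 \<le> \<nu>" "0 \<le> \<mu>" "length ds \<le> 3" "0 < E" "0 < E'"
  shows "pderivs ds (bessel_matrix \<nu> \<mu> 0 0) E E'
           = bessel_matrix \<nu> \<mu> (count_list ds True) (count_list ds False) E E'"
  using assms(3-5)
proof (induction ds arbitrary: E E')
  case (Cons d ds)
  then have "count_list ds True + count_list ds False \<le> 2"
    using count_list_True_False[of ds] by simp
  note deriv = has_vector_derivative_eq_bessel_matrix[OF assms(1,2) this Cons.prems(2,3), of "pderivs ds _"]
  show ?case
    using Cons.IH Cons.prems by (cases d) (auto intro!: vector_derivative_at deriv)
qed simp

lemma partial_exists_bessel_matrix:
  assumes "0 \<le> \<nu>" "0 \<le> \<mu>" "length ds \<le> 2" "0 < E" "0 < E'"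
  shows "partial_exists d ds (bessel_matrix \<nu> \<mu> 0 0) E E'"
proof -
  have "count_list ds True + count_list ds False \<le> 2"
    using assms(3) count_list_True_False[of ds] by simp
  note deriv = has_vector_derivative_eq_bessel_matrix[OF assms(1,2) this assms(4,5),
      of "pderivs ds (bessel_matrix \<nu> \<mu> 0 0)"]
  show ?thesis
    using deriv pderivs_bessel_matrix[OF assms(1,2)] assms(3)
    by (auto simp: partial_exists_def intro: differentiableI_vector)
qed

lemma continuous_on_pderivs_bessel_matrix:
  assumes "0 \<le> \<nu>" "0 \<le> \<mu>" "length ds \<le> 3"
  shows "continuous_on ({0<..} \<times> {0<..}) (\<lambda>q. pderivs ds (bessel_matrix \<nu> \<mu> 0 0) (fst q) (snd q))"
proof -
  have cont: "continuous_on ({0<..} \<times> {0<..})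
      (\<lambda>q. bessel_matrix \<nu> \<mu> (count_list ds True) (count_list ds False) (fst q) (snd q))"
    using assms count_list_True_False[of ds] by (intro continuous_on_bessel_matrix) auto
  have eq: "pderivs ds (bessel_matrix \<nu> \<mu> 0 0) (fst q) (snd q)
      = bessel_matrix \<nu> \<mu> (count_list ds True) (count_list ds False) (fst q) (snd q)"
    if "q \<in> {0<..} \<times> {0<..}" for q
    by (rule pderivs_bessel_matrix) (use that assms in auto)
  show ?thesis
    by (rule continuous_on_cong[OF refl, THEN iffD2, OF eq cont])
qed

end

definition cone_weight :: "(real \<Rightarrow> real \<Rightarrow> real) \<Rightarrow> int \<Rightarrow> int \<Rightarrow> real \<times> real \<Rightarrow> complex" where
  "cone_weight V m m' p = indicator ({0<..} \<times> {0<..<pi}) p *\<^sub>R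
     (cis (2 * of_int (m' - m) * snd p) * complex_of_real ((V (fst p) (snd p))\<^sup>2 * fst p / (2 * pi)))"

lemma radial_weight_cone_weight:
  assumes V_meas: "set_borel_measurable lborel ({0<..} \<times> UNIV) (\<lambda>p. V (fst p) (snd p))"
    and V_L2: "set_integrable lborel ({0<..} \<times> {0<..<pi}) (\<lambda>p. ((1 + fst p) * V (fst p) (snd p))\<^sup>2 * fst p)"
  shows "radial_weight lborel (cone_weight V m m') fst"
proof
  define S :: "(real \<times> real) set" where "S = {0<..} \<times> {0<..<pi}"
  define V0 where "V0 p = indicator ({0<..} \<times> UNIV) p *\<^sub>R V (fst p) (snd p)" for p :: "real \<times> real"
  have "V0 \<in> borel_measurable borel"
    using V_meas unfolding set_borel_measurable_def V0_def by simp
  moreover have "S \<in> sets borel"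
    unfolding S_def by (intro borel_open open_Times) auto
  moreover have "(\<lambda>p. cis (2 * of_int (m' - m) * snd p) * complex_of_real (fst p / (2 * pi)))
      \<in> borel_measurable borel"
    by (intro borel_measurable_continuous_onI continuous_intros) simp
  ultimately have "(\<lambda>p. indicator S p *\<^sub>R (cis (2 * of_int (m' - m) * snd p)
      * complex_of_real (fst p / (2 * pi)) * complex_of_real ((V0 p)\<^sup>2))) \<in> borel_measurable borel"
    by measurable
  also have "(\<lambda>p. indicator S p *\<^sub>R (cis (2 * of_int (m' - m) * snd p)
      * complex_of_real (fst p / (2 * pi)) * complex_of_real ((V0 p)\<^sup>2))) = cone_weight V m m'"
    by (auto simp: fun_eq_iff cone_weight_def S_def V0_def indicator_def mult_ac)
  finally show "cone_weight V m m' \<in> borel_measurable lborel"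
    by simp
  show "fst \<in> borel_measurable lborel"
    by (simp add: borel_measurable_continuous_onI continuous_on_fst)
  show "0 < fst p" if "cone_weight V m m' p \<noteq> 0" for p
    using that by (auto simp: cone_weight_def indicator_def)
  have "norm (cone_weight V m m' p) = indicator S p * ((V (fst p) (snd p))\<^sup>2 * fst p / (2 * pi))" for p
    by (auto simp: cone_weight_def S_def indicator_def norm_mult abs_mult
        simp del: of_real_mult of_real_divide of_real_power)
  then have "norm (cone_weight V m m' p) * (1 + fst p)\<^sup>2
      = 1 / (2 * pi) * (indicator S p *\<^sub>R (((1 + fst p) * V (fst p) (snd p))\<^sup>2 * fst p))" for p
    by (simp add: power_mult_distrib)
  then show "integrable lborel (\<lambda>p. norm (cone_weight V m m' p) * (1 + fst p)\<^sup>2)"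
    using V_L2 by (simp add: set_integrable_def S_def)
qed

lemma vmat_eq_bessel_matrix:
  assumes "radial_weight lborel (cone_weight V m m') fst"
  shows "vmat V \<alpha> m m' = radial_weight.bessel_matrix lborel (cone_weight V m m') fst
     \<bar>2 * of_int m + \<alpha>\<bar> \<bar>2 * of_int m' + \<alpha>\<bar> 0 0"
proof (intro ext)
  fix E E'
  have "indicator ({0<..} \<times> {0<..<pi}) p *\<^sub>R (cnj (phi \<alpha> m E (fst p) (snd p))
        * complex_of_real ((V (fst p) (snd p))\<^sup>2) * phi \<alpha> m' E' (fst p) (snd p) * complex_of_real (fst p))
      = cone_weight V m m' p * complex_of_real (besselJ_Ederiv \<bar>2 * of_int m + \<alpha>\<bar> 0 E (fst p)
          * besselJ_Ederiv \<bar>2 * of_int m' + \<alpha>\<bar> 0 E' (fst p))" for p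
  proof -
    have "cnj (cis (2 * of_int m * snd p)) * cis (2 * of_int m' * snd p) = cis (2 * of_int (m' - m) * snd p)"
      by (simp add: cis_cnj cis_mult algebra_simps)
    moreover have "complex_of_real (sqrt (2 * pi)) * complex_of_real (sqrt (2 * pi)) = 2 * pi"
      by (simp flip: of_real_mult)
    ultimately show ?thesis
      by (simp add: cone_weight_def phi_def field_simps)
  qed
  then show "vmat V \<alpha> m m' E E' = radial_weight.bessel_matrix lborel (cone_weight V m m') fst
     \<bar>2 * of_int m + \<alpha>\<bar> \<bar>2 * of_int m' + \<alpha>\<bar> 0 0 E E'"
    unfolding vmat_def radial_weight.bessel_matrix_def[OF assms] set_lebesgue_integral_def
    by simp
qed

theorem lemma3:
  fixes V :: "real \<Rightarrow> real \<Rightarrow> real" and \<alpha> :: real and m m' :: int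
  assumes V_meas: "set_borel_measurable lborel ({0<..} \<times> UNIV) (\<lambda>p. V (fst p) (snd p))"
    and V_per: "\<And>r \<theta>. V r (\<theta> + pi) = V r \<theta>"
    and V_L2: "set_integrable lborel ({0<..} \<times> {0<..<pi})
                 (\<lambda>p. ((1 + fst p) * V (fst p) (snd p))\<^sup>2 * fst p)"
    and \<alpha>: "0 \<le> \<alpha>" "\<alpha> \<le> 1"
  shows "\<forall>ds. length ds \<le> 3 \<longrightarrow>
           (\<forall>E E'. 0 < E \<longrightarrow> 0 < E' \<longrightarrow>
              (\<forall>d ds'. ds = d # ds' \<longrightarrow> partial_exists d ds' (vmat V \<alpha> m m') E E'))
         \<and> set_borel_measurable lborel ({0<..} \<times> {0<..})
              (\<lambda>p. pderivs ds (vmat V \<alpha> m m') (fst p) (snd p))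
         \<and> (\<forall>K. compact K \<and> K \<subseteq> {0<..} \<times> {0<..} \<longrightarrow>
              (\<exists>C. AE p in lborel. p \<in> K \<longrightarrow>
                     norm (pderivs ds (vmat V \<alpha> m m') (fst p) (snd p)) \<le> C))"
proof -
  \<comment> \<open>Only \<open>\<nu>, \<mu> \<ge> 0\<close> matters, which holds for every \<open>\<alpha>\<close>.\<close>
  define \<nu> \<mu> where "\<nu> = \<bar>2 * of_int m + \<alpha>\<bar>" and "\<mu> = \<bar>2 * of_int m' + \<alpha>\<bar>"
  have \<nu>\<mu>: "0 \<le> \<nu>" "0 \<le> \<mu>"
    by (simp_all add: \<nu>_def \<mu>_def)
  interpret radial_weight lborel "cone_weight V m m'" fst
    using V_meas V_L2 by (rule radial_weight_cone_weight)
  have vmat: "vmat V \<alpha> m m' = bessel_matrix \<nu> \<mu> 0 0"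
    unfolding \<nu>_def \<mu>_def by (rule vmat_eq_bessel_matrix[OF radial_weight_axioms])
  show ?thesis
    unfolding vmat
  proof (intro allI impI conjI)
    fix ds :: "bool list" assume ds: "length ds \<le> 3"
    have cont: "continuous_on ({0<..} \<times> {0<..}) (\<lambda>q. pderivs ds (bessel_matrix \<nu> \<mu> 0 0) (fst q) (snd q))"
      using \<nu>\<mu> ds by (rule continuous_on_pderivs_bessel_matrix)
    show "partial_exists d ds' (bessel_matrix \<nu> \<mu> 0 0) E E'" if "0 < E" "0 < E'" "ds = d # ds'" for E E' d ds'
      using that ds by (intro partial_exists_bessel_matrix \<nu>\<mu>) auto
    show "set_borel_measurable lborel ({0<..} \<times> {0<..}) (\<lambda>p. pderivs ds (bessel_matrix \<nu> \<mu> 0 0) (fst p) (snd p))"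
      using open_Times[OF open_greaterThan open_greaterThan] cont by (rule set_borel_measurable_continuous_on)
    fix K :: "(real \<times> real) set" assume "compact K \<and> K \<subseteq> {0<..} \<times> {0<..}"
    then obtain C where "\<forall>p\<in>K. norm (pderivs ds (bessel_matrix \<nu> \<mu> 0 0) (fst p) (snd p)) \<le> C"
      using continuous_on_compact_bound[OF cont] by blast
    then show "\<exists>C. AE p in lborel. p \<in> K \<longrightarrow> norm (pderivs ds (bessel_matrix \<nu> \<mu> 0 0) (fst p) (snd p)) \<le> C"
      by (intro exI AE_I2) auto
  qed
qed

end
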